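(* For any integers $p,d\ge2$, any $p$-element poset $P$ and any positive integer $k$, $$sat([k]^d,P)\le\sum_{r=d}^{d+p-2}s_{k,d,r}.$$
   Context: $[k]^d$ is ordered coordinatewise. The rank of $x\in[k]^d$ is $\sum_i x_i$, and $s_{k,d,r}$ is the number of elements of $[k]^d$ of rank $r$. For posets $P,R$, $P$ is a weak subposet of $R$ if there is an injection $i:P\to R$ with $p\le_P p'\Rightarrow i(p)\le_R i(p')$. A subset $F\subseteq Q$ is weak $P$-saturated if $F$ is weak $P$-free (does not contain $P$ as a weak subposet) but for every $x\in Q\setminus F$, $F\cup\{x\}$ contains $P$ as a weak subposet. $sat(Q,P)$ is the minimum size of a weak $P$-saturated subset of $Q$. *)

theory Defs
  imports Main
begin

definition grid :: "nat \<Rightarrow> nat \<Rightarrow> (nat \<Rightarrow> nat) set" where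
  "grid k d = {x. (\<forall>i<d. x i \<in> {1..k}) \<and> (\<forall>i\<ge>d. x i = 0)}"

definition grid_le :: "(nat \<Rightarrow> nat) \<Rightarrow> (nat \<Rightarrow> nat) \<Rightarrow> bool" where
  "grid_le x y \<longleftrightarrow> (\<forall>i. x i \<le> y i)"

definition grid_rank :: "nat \<Rightarrow> (nat \<Rightarrow> nat) \<Rightarrow> nat" where
  "grid_rank d x = (\<Sum>i<d. x i)"

definition s_count :: "nat \<Rightarrow> nat \<Rightarrow> nat \<Rightarrow> nat" where
  "s_count k d r = card {x \<in> grid k d. grid_rank d x = r}"

definition is_poset :: "'a set \<Rightarrow> ('a \<Rightarrow> 'a \<Rightarrow> bool) \<Rightarrow> bool" where
  "is_poset A le \<longleftrightarrow> (\<forall>a\<in>A. le a a) \<and>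
     (\<forall>a\<in>A. \<forall>b\<in>A. le a b \<and> le b a \<longrightarrow> a = b) \<and>
     (\<forall>a\<in>A. \<forall>b\<in>A. \<forall>c\<in>A. le a b \<and> le b c \<longrightarrow> le a c)"

definition weak_subposet ::
  "'a set \<Rightarrow> ('a \<Rightarrow> 'a \<Rightarrow> bool) \<Rightarrow> 'b set \<Rightarrow> ('b \<Rightarrow> 'b \<Rightarrow> bool) \<Rightarrow> bool" where
  "weak_subposet P leP R leR \<longleftrightarrow>
     (\<exists>f. inj_on f P \<and> f ` P \<subseteq> R \<and>
          (\<forall>p\<in>P. \<forall>p'\<in>P. leP p p' \<longrightarrow> leR (f p) (f p')))"

definition weak_saturated ::
  "'b set \<Rightarrow> ('b \<Rightarrow> 'b \<Rightarrow> bool) \<Rightarrow> 'a set \<Rightarrow> ('a \<Rightarrow> 'a \<Rightarrow> bool) \<Rightarrow> 'b set \<Rightarrow> bool" where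
  "weak_saturated Q leQ P leP F \<longleftrightarrow> F \<subseteq> Q \<and> \<not> weak_subposet P leP F leQ \<and>
     (\<forall>x\<in>Q - F. weak_subposet P leP (insert x F) leQ)"

definition sat ::
  "'b set \<Rightarrow> ('b \<Rightarrow> 'b \<Rightarrow> bool) \<Rightarrow> 'a set \<Rightarrow> ('a \<Rightarrow> 'a \<Rightarrow> bool) \<Rightarrow> nat" where
  "sat Q leQ P leP = (LEAST n. \<exists>F. weak_saturated Q leQ P leP F \<and> card F = n)"

end

theory Submission
  imports Defs
begin

text \<open>
  Let \<open>L\<close> be the set of elements of \<open>[k]^d\<close> of rank at most \<open>d + p - 2\<close>, i.e. the
  \<open>p - 1\<close> lowest rank levels. Run through \<open>L\<close> by increasing rank and keep an element
  whenever the kept set stays \<open>P\<close>-free. The resulting \<open>F \<subseteq> L\<close> is \<open>P\<close>-saturated in the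
  whole grid. An element \<open>x\<close> of higher
  rank either lies above a rejected \<open>y \<in> L\<close>, and then \<open>x\<close> can take the place of \<open>y\<close> in
  the copy of \<open>P\<close> that caused the rejection, because \<open>y\<close> is maximal in that copy; or all
  elements of \<open>L\<close> below \<open>x\<close> were kept, and then a saturated chain from rank \<open>d\<close> up to
  \<open>x\<close> gives a \<open>p\<close>-chain in \<open>F \<union> {x}\<close>, which contains every \<open>p\<close>-element poset.
\<close>

lemma weak_subposet_mono:
  assumes "weak_subposet P leP T R" "T \<subseteq> T'"
  shows "weak_subposet P leP T' R"
proof -
  obtain f where "inj_on f P" "f ` P \<subseteq> T" "\<forall>p\<in>P. \<forall>p'\<in>P. leP p p' \<longrightarrow> R (f p) (f p')"
    using assms(1) unfolding weak_subposet_def by blast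
  then show ?thesis
    using assms(2) unfolding weak_subposet_def by (intro exI[of _ f]) auto
qed

lemma not_weak_subposet_empty:
  assumes "P \<noteq> {}"
  shows "\<not> weak_subposet P leP {} R"
  using assms unfolding weak_subposet_def by blast

lemma sat_le_card:
  assumes "weak_saturated Q leQ P leP F"
  shows "sat Q leQ P leP \<le> card F"
  unfolding sat_def using assms by (intro Least_le) blast

lemma exists_inj_monotone_ranking:
  fixes h :: "'a \<Rightarrow> nat"
  assumes "finite S" "\<And>a b. a \<in> S \<Longrightarrow> b \<in> S \<Longrightarrow> R a b \<Longrightarrow> a \<noteq> b \<Longrightarrow> h a < h b"
  shows "\<exists>g. inj_on g S \<and> g ` S \<subseteq> {..<card S} \<and> (\<forall>a\<in>S. \<forall>b\<in>S. R a b \<longrightarrow> g a \<le> g b)"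
  using assms
proof (induction S rule: finite_ranking_induct[where f = h])
  case empty
  then show ?case by simp
next
  case (insert x S)
  show ?case
  proof (cases "x \<in> S")
    case True
    then show ?thesis using insert by (simp add: insert_absorb)
  next
    case x_new: False
    have "\<And>a b. a \<in> S \<Longrightarrow> b \<in> S \<Longrightarrow> R a b \<Longrightarrow> a \<noteq> b \<Longrightarrow> h a < h b"
      using insert.prems by blast
    then obtain g where g: "inj_on g S" "g ` S \<subseteq> {..<card S}"
      "\<forall>a\<in>S. \<forall>b\<in>S. R a b \<longrightarrow> g a \<le> g b"
      using insert.IH by blast
    define g' where "g' = g(x := card S)"
    have g'_S: "g' a = g a" if "a \<in> S" for a
      using that x_new unfolding g'_def by auto
    have "inj_on g' (insert x S)"
      using g(1,2) x_new g'_S unfolding inj_on_def g'_def by fastforce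
    moreover have "g' ` insert x S \<subseteq> {..<card (insert x S)}"
      using g(2) x_new insert.hyps(1) g'_S unfolding g'_def by auto
    moreover have "g' a \<le> g' b" if "a \<in> insert x S" "b \<in> insert x S" "R a b" for a b
    proof -
      have "h b \<le> h x" if "b \<in> S" using insert.hyps(2) that .
      then have "\<not> (a = x \<and> b \<in> S)"
        using insert.prems[of x b] x_new \<open>R a b\<close> by force
      then show ?thesis
        using that g(2,3) g'_S x_new unfolding g'_def by auto
    qed
    ultimately show ?thesis by blast
  qed
qed

lemma poset_linear_extension:
  assumes "finite P" "is_poset P leP"
  shows "\<exists>g. inj_on g P \<and> g ` P \<subseteq> {..<card P} \<and> (\<forall>a\<in>P. \<forall>b\<in>P. leP a b \<longrightarrow> g a \<le> g b)"
proof (rule exists_inj_monotone_ranking[OF assms(1), where h = "\<lambda>a. card {c \<in> P. leP c a}"])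
  fix a b assume ab: "a \<in> P" "b \<in> P" "leP a b" "a \<noteq> b"
  have "{c \<in> P. leP c a} \<subset> {c \<in> P. leP c b}"
    using assms(2) ab unfolding is_poset_def by blast
  then show "card {c \<in> P. leP c a} < card {c \<in> P. leP c b}"
    using assms(1) by (simp add: psubset_card_mono)
qed

lemma weak_subposet_of_chain:
  assumes "finite P" "is_poset P leP" "card P = p"
    and mono: "\<And>i j. i \<le> j \<Longrightarrow> j < p \<Longrightarrow> R (c i) (c j)"
    and "inj_on c {..<p}" "c ` {..<p} \<subseteq> T"
  shows "weak_subposet P leP T R"
proof -
  obtain g where g: "inj_on g P" "g ` P \<subseteq> {..<p}" "\<forall>a\<in>P. \<forall>b\<in>P. leP a b \<longrightarrow> g a \<le> g b"
    using poset_linear_extension[OF assms(1,2)] assms(3) by blast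
  have "inj_on (c \<circ> g) P"
    using g(1,2) assms(5) by (metis comp_inj_on inj_on_subset)
  moreover have "(c \<circ> g) ` P \<subseteq> T"
    using g(2) assms(6) by (auto simp: image_comp[symmetric])
  ultimately show ?thesis
    using g(2,3) mono unfolding weak_subposet_def by (intro exI[of _ "c \<circ> g"]) auto
qed

lemma weak_subposet_replace_maximal:
  assumes "weak_subposet P leP (insert y G) R" "reflp R" "transp R"
    and "R y x" "x \<notin> G" and y_maximal: "\<And>w. w \<in> G \<Longrightarrow> \<not> R y w"
  shows "weak_subposet P leP (insert x G) R"
proof -
  obtain f where f: "inj_on f P" "f ` P \<subseteq> insert y G" "\<forall>q\<in>P. \<forall>q'\<in>P. leP q q' \<longrightarrow> R (f q) (f q')"
    using assms(1) unfolding weak_subposet_def by blast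
  define f' where "f' q = (if f q = y then x else f q)" for q
  have in_G: "f q \<in> G" if "q \<in> P" "f q \<noteq> y" for q
    using f(2) that by blast
  have "inj_on f' P"
    using f(1) in_G assms(5) unfolding f'_def inj_on_def by metis
  moreover have "f' ` P \<subseteq> insert x G"
    using in_G unfolding f'_def by auto
  moreover have "R (f' q) (f' q')" if "q \<in> P" "q' \<in> P" "leP q q'" for q q'
  proof -
    have "R (f q) (f q')" using f(3) that by blast
    moreover have "f q' = y" if "f q = y" using in_G y_maximal \<open>q' \<in> P\<close> calculation that by metis
    ultimately show ?thesis
      using assms(2,3,4) unfolding f'_def by (auto dest: reflpD transpD)
  qed
  ultimately show ?thesis unfolding weak_subposet_def by blast
qed

lemma greedy_weak_free_subset:
  fixes h :: "'b \<Rightarrow> nat"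
  assumes "finite S" "P \<noteq> {}"
  shows "\<exists>F \<subseteq> S. \<not> weak_subposet P leP F R \<and>
     (\<forall>y\<in>S - F. weak_subposet P leP (insert y {w\<in>F. h w \<le> h y}) R)"
  using assms(1)
proof (induction S rule: finite_ranking_induct[where f = h])
  case empty
  then show ?case using not_weak_subposet_empty[OF assms(2)] by blast
next
  case (insert x S)
  from insert.IH obtain F where F: "F \<subseteq> S" "\<not> weak_subposet P leP F R"
    "\<forall>y\<in>S - F. weak_subposet P leP (insert y {w\<in>F. h w \<le> h y}) R" by blast
  have below_x: "{w\<in>F. h w \<le> h x} = F"
    using F(1) insert.hyps(2) by blast
  show ?case
  proof (cases "weak_subposet P leP (insert x F) R")
    case True
    then have "\<forall>y\<in>insert x S - F. weak_subposet P leP (insert y {w\<in>F. h w \<le> h y}) R"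
      using F(3) below_x by auto
    then show ?thesis using F(1,2) by (intro exI[of _ F]) auto
  next
    case False
    have "weak_subposet P leP (insert y {w\<in>insert x F. h w \<le> h y}) R"
      if "y \<in> insert x S - insert x F" for y
      using F(3) that by (auto elim!: weak_subposet_mono)
    then show ?thesis using F(1) False by (intro exI[of _ "insert x F"]) auto
  qed
qed

lemma grid_finite: "finite (grid k d)"
proof -
  have "grid k d = {x. \<forall>i. (i \<in> {..<d} \<longrightarrow> x i \<in> {1..k}) \<and> (i \<notin> {..<d} \<longrightarrow> x i = 0)}"
    unfolding grid_def by (simp add: not_less) blast
  then show ?thesis
    using finite_set_of_finite_funs[of "{..<d}" "{1..k}" 0] by simp
qed

lemma reflp_grid_le: "reflp grid_le"
  unfolding reflp_def grid_le_def by simp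

lemma transp_grid_le: "transp grid_le"
  unfolding transp_def grid_le_def using le_trans by blast

lemma grid_rank_ge: "x \<in> grid k d \<Longrightarrow> d \<le> grid_rank d x"
  using sum_mono[of "{..<d}" "\<lambda>_. 1::nat" x] unfolding grid_def grid_rank_def by auto

lemma grid_eq_if_le_rank_le:
  assumes "y \<in> grid k d" "w \<in> grid k d" "grid_le y w" "grid_rank d w \<le> grid_rank d y"
  shows "w = y"
proof (rule ccontr)
  assume "w \<noteq> y"
  then obtain i where i: "w i \<noteq> y i" by blast
  have "i < d"
  proof (rule ccontr)
    assume "\<not> i < d"
    then show False using assms(1,2) i unfolding grid_def by simp
  qed
  moreover have "y i < w i" using assms(3) i unfolding grid_le_def by (metis le_neq_implies_less)
  ultimately have "(\<Sum>j<d. y j) < (\<Sum>j<d. w j)"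
    using assms(3) unfolding grid_le_def by (intro sum_strict_mono_ex1) auto
  then show False using assms(4) unfolding grid_rank_def by simp
qed

lemma grid_exists_lower_cover:
  assumes "x \<in> grid k d" "d < grid_rank d x"
  shows "\<exists>y\<in>grid k d. grid_le y x \<and> grid_rank d y + 1 = grid_rank d x"
proof -
  have "\<exists>i<d. 1 < x i"
  proof (rule ccontr)
    assume "\<not> (\<exists>i<d. 1 < x i)"
    then have "\<forall>i<d. x i = 1" using assms(1) unfolding grid_def by fastforce
    then show False using assms(2) unfolding grid_rank_def by simp
  qed
  then obtain i where i: "i < d" "1 < x i" by blast
  define y where "y = x(i := x i - 1)"
  have "(\<Sum>j<d. x j) = x i + (\<Sum>j\<in>{..<d} - {i}. x j)"
    using i(1) by (simp add: sum.remove)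
  moreover have "(\<Sum>j<d. y j) = y i + (\<Sum>j\<in>{..<d} - {i}. x j)"
    using i(1) unfolding y_def by (simp add: sum.remove)
  ultimately have "grid_rank d y + 1 = grid_rank d x"
    using i(2) unfolding grid_rank_def y_def by simp
  moreover have "y \<in> grid k d" "grid_le y x"
    using assms(1) i unfolding y_def grid_def grid_le_def by auto
  ultimately show ?thesis by blast
qed

lemma grid_exists_below_of_rank:
  assumes "x \<in> grid k d" "d \<le> r" "r \<le> grid_rank d x"
  shows "\<exists>y\<in>grid k d. grid_le y x \<and> grid_rank d y = r"
  using assms
proof (induction "grid_rank d x - r" arbitrary: x)
  case 0
  then show ?case using reflp_grid_le by (auto dest: reflpD)
next
  case (Suc n)
  have "d < grid_rank d x" using Suc.hyps(2) Suc.prems(2) by linarith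
  then obtain z where z: "z \<in> grid k d" "grid_le z x" "grid_rank d z + 1 = grid_rank d x"
    using grid_exists_lower_cover[OF Suc.prems(1)] by blast
  have "n = grid_rank d z - r" "r \<le> grid_rank d z" using z(3) Suc.hyps(2) by linarith+
  then obtain y where "y \<in> grid k d" "grid_le y z" "grid_rank d y = r"
    using Suc.hyps(1)[OF _ z(1) Suc.prems(2)] by blast
  then show ?case using z(2) transp_grid_le by (blast dest: transpD)
qed

lemma grid_chain_below:
  assumes "x \<in> grid k d" "d + n \<le> grid_rank d x"
  shows "\<exists>c. c n = x \<and> inj_on c {..n} \<and> (\<forall>j<n. c j \<in> grid k d \<and> grid_rank d (c j) = d + j) \<and>
    (\<forall>i j. i \<le> j \<longrightarrow> j \<le> n \<longrightarrow> grid_le (c i) (c j))"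
  using assms
proof (induction n arbitrary: x)
  case 0
  then show ?case using reflp_grid_le by (intro exI[of _ "\<lambda>_. x"]) (auto dest: reflpD)
next
  case (Suc n)
  have "\<exists>y\<in>grid k d. grid_le y x \<and> grid_rank d y = d + n"
    using grid_exists_below_of_rank[OF Suc.prems(1)] Suc.prems(2) by simp
  then obtain y where y: "y \<in> grid k d" "grid_le y x" "grid_rank d y = d + n" by blast
  then obtain c where c: "c n = y" "inj_on c {..n}" "\<forall>j<n. c j \<in> grid k d \<and> grid_rank d (c j) = d + j"
    "\<forall>i j. i \<le> j \<longrightarrow> j \<le> n \<longrightarrow> grid_le (c i) (c j)"
    using Suc.IH[OF y(1)] y(3) by auto
  define c' where "c' = c(Suc n := x)"
  have rank_c: "grid_rank d (c j) \<le> d + n" if "j \<le> n" for j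
    using c(1,3) y(3) that by (cases "j = n") auto
  have "x \<notin> c ` {..n}"
    using rank_c Suc.prems(2) by fastforce
  then have "inj_on c' {..Suc n}"
    using c(2) unfolding c'_def atMost_Suc by (simp add: inj_on_fun_updI)
  moreover have "grid_le (c' i) (c' j)" if "i \<le> j" "j \<le> Suc n" for i j
  proof (cases "j = Suc n")
    case False
    then show ?thesis using c(4) that unfolding c'_def by simp
  next
    case j_top: True
    show ?thesis
    proof (cases "i = Suc n")
      case True
      then show ?thesis using j_top reflp_grid_le unfolding c'_def by (simp add: reflpD)
    next
      case False
      then have "i \<le> n" using that j_top by simp
      then have "grid_le (c i) y" using c(4)[rule_format, of i n] c(1) by simp
      then show ?thesis
        using False j_top y(2) transp_grid_le unfolding c'_def by (auto dest: transpD)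
    qed
  qed
  moreover have "\<forall>j<Suc n. c' j \<in> grid k d \<and> grid_rank d (c' j) = d + j"
    using c(1,3) y unfolding c'_def by (auto simp: less_Suc_eq)
  moreover have "c' (Suc n) = x" unfolding c'_def by simp
  ultimately show ?case by blast
qed

lemma card_grid_rank_le:
  "card {x \<in> grid k d. grid_rank d x \<le> m} = (\<Sum>r = d..m. s_count k d r)"
proof -
  have "{x \<in> grid k d. grid_rank d x \<le> m} = (\<Union>r\<in>{d..m}. {x \<in> grid k d. grid_rank d x = r})"
    using grid_rank_ge by fastforce
  also have "card \<dots> = (\<Sum>r = d..m. card {x \<in> grid k d. grid_rank d x = r})"
    by (intro card_UN_disjoint) (auto simp: grid_finite)
  finally show ?thesis unfolding s_count_def .
qed

lemma grid_weak_subposet_raise_top: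
  assumes "weak_subposet P leP (insert y G) grid_le"
    and "y \<in> grid k d" "y \<notin> G" "G \<subseteq> grid k d" "\<And>w. w \<in> G \<Longrightarrow> grid_rank d w \<le> grid_rank d y"
    and "grid_le y x" "grid_rank d y < grid_rank d x"
  shows "weak_subposet P leP (insert x G) grid_le"
proof -
  have y_maximal: "\<not> grid_le y w" if "w \<in> G" for w
  proof
    assume "grid_le y w"
    moreover have "w \<in> grid k d" "grid_rank d w \<le> grid_rank d y" using assms(4,5) that by auto
    ultimately have "w = y" using grid_eq_if_le_rank_le assms(2) by simp
    then show False using assms(3) that by simp
  qed
  have "x \<notin> G" using assms(5,7) by (meson leD)
  then show ?thesis
    using weak_subposet_replace_maximal[where R = grid_le, OF assms(1) reflp_grid_le transp_grid_le
        assms(6) _ y_maximal] by blast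
qed

lemma weak_subposet_insert_above_low_ranks:
  assumes "finite P" "card P = p" "p \<ge> 1" "is_poset P leP"
    and x: "x \<in> grid k d" "d + p - 2 < grid_rank d x"
    and below: "\<And>y. y \<in> grid k d \<Longrightarrow> grid_le y x \<Longrightarrow> grid_rank d y \<le> d + p - 2 \<Longrightarrow> y \<in> T"
  shows "weak_subposet P leP (insert x T) grid_le"
proof -
  have "d + (p - 1) \<le> grid_rank d x" using x(2) assms(3) by linarith
  then obtain c where c: "c (p - 1) = x" "inj_on c {..p - 1}"
    "\<forall>j<p - 1. c j \<in> grid k d \<and> grid_rank d (c j) = d + j"
    "\<forall>i j. i \<le> j \<longrightarrow> j \<le> p - 1 \<longrightarrow> grid_le (c i) (c j)"
    using grid_chain_below[OF x(1)] by blast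
  have "c j \<in> T" if "j < p - 1" for j
    using below c(3) c(4)[rule_format, of j "p - 1"] c(1) that by simp
  then have "c ` {..p - 1} \<subseteq> insert x T"
    using c(1) by (auto simp: le_less)
  moreover have "{..<p} = {..p - 1}" using assms(3) by auto
  ultimately show ?thesis
    using weak_subposet_of_chain[OF assms(1,4,2), of grid_le c] c(2,4) by simp
qed

lemma exists_weak_saturated_in_low_ranks:
  assumes "finite P" "card P = p" "p \<ge> 1" "is_poset P leP"
  shows "\<exists>F \<subseteq> {x \<in> grid k d. grid_rank d x \<le> d + p - 2}. weak_saturated (grid k d) grid_le P leP F"
proof -
  define L where "L = {x \<in> grid k d. grid_rank d x \<le> d + p - 2}"
  have "finite L" unfolding L_def using grid_finite by simp
  moreover have "P \<noteq> {}" using assms(2,3) by auto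
  ultimately have "\<exists>F\<subseteq>L. \<not> weak_subposet P leP F grid_le \<and>
      (\<forall>y\<in>L - F. weak_subposet P leP (insert y {w\<in>F. grid_rank d w \<le> grid_rank d y}) grid_le)"
    by (rule greedy_weak_free_subset)
  then obtain F where F: "F \<subseteq> L" "\<not> weak_subposet P leP F grid_le"
    and rejected: "\<forall>y\<in>L - F. weak_subposet P leP (insert y {w\<in>F. grid_rank d w \<le> grid_rank d y}) grid_le"
    by blast
  have "weak_subposet P leP (insert x F) grid_le" if x: "x \<in> grid k d - F" for x
  proof (cases "x \<in> L")
    case True
    then have "weak_subposet P leP (insert x {w\<in>F. grid_rank d w \<le> grid_rank d x}) grid_le"
      using rejected x by blast
    then show ?thesis by (rule weak_subposet_mono) blast
  next
    case False
    then have rank_x: "d + p - 2 < grid_rank d x" using x unfolding L_def by auto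
    show ?thesis
    proof (cases "\<exists>y\<in>L - F. grid_le y x")
      case True
      then obtain y where y: "y \<in> L - F" "grid_le y x" by blast
      define G where "G = {w\<in>F. grid_rank d w \<le> grid_rank d y}"
      have "weak_subposet P leP (insert y G) grid_le"
        using rejected y(1) unfolding G_def by blast
      moreover have "y \<in> grid k d" "y \<notin> G" "G \<subseteq> grid k d" "grid_rank d y < grid_rank d x"
        using y(1) F(1) rank_x unfolding G_def L_def by auto
      moreover have "grid_rank d w \<le> grid_rank d y" if "w \<in> G" for w
        using that unfolding G_def by simp
      ultimately have "weak_subposet P leP (insert x G) grid_le"
        using grid_weak_subposet_raise_top y(2) by metis
      then show ?thesis by (rule weak_subposet_mono) (auto simp: G_def)
    next
      case False
      then show ?thesis
        using weak_subposet_insert_above_low_ranks[OF assms, of x k d F] x rank_x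
        unfolding L_def by blast
    qed
  qed
  then have "weak_saturated (grid k d) grid_le P leP F"
    using F(1,2) unfolding weak_saturated_def L_def by blast
  then show ?thesis using F(1) unfolding L_def by blast
qed

theorem proposition1p7:
  fixes P :: "'a set" and leP :: "'a \<Rightarrow> 'a \<Rightarrow> bool" and p d k :: nat
  assumes "p \<ge> 2" and "d \<ge> 2" and "k \<ge> 1"
    and "finite P" and "card P = p" and "is_poset P leP"
  shows "sat (grid k d) grid_le P leP \<le> (\<Sum>r = d..d + p - 2. s_count k d r)"
proof -
  let ?L = "{x \<in> grid k d. grid_rank d x \<le> d + p - 2}"
  have "p \<ge> 1" using assms(1) by linarith
  then obtain F where F_low: "F \<subseteq> ?L" and F_sat: "weak_saturated (grid k d) grid_le P leP F"
    using exists_weak_saturated_in_low_ranks[OF assms(4,5) _ assms(6), of k d] by blast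
  have "sat (grid k d) grid_le P leP \<le> card F"
    using F_sat by (rule sat_le_card)
  also have "\<dots> \<le> card ?L"
    using F_low by (intro card_mono) (simp_all add: grid_finite)
  also have "\<dots> = (\<Sum>r = d..d + p - 2. s_count k d r)"
    by (rule card_grid_rank_le)
  finally show ?thesis .
qed

end
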